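(* For every integer $k\ge 2$, no online algorithm achieves a competitive ratio better than $\frac76$ for the ATWC dispersion problem for arbitrary $k$-dimensional polytopes; that is, there is no online algorithm that is $\sigma$-competitive with $\sigma<\frac76$ for every $k$-dimensional polytope $P$.
   Context: Let $P\subset\mathbb{R}^k$ be a $k$-dimensional polytope with boundary $\partial P$; distances are Euclidean. An instance is a sequence $S=((s_1,d_1),\dots,(s_n,d_n))$ with $s_i<d_i$, $0=s_1\le\dots\le s_n$; point $i$ is present at time $t$ iff $s_i\le t\le d_i$; $T=\max_i d_i$. For locations $X=(X_1,\dots,X_n)\in P^n$, $d_{min}(t;X)=\min\{dis(X_i,\partial P),dis(X_i,X_j)\}$ over present points $i\ne j$ at time $t$, and $OPT_A(S;P)=\max_X\min_{t\le T}d_{min}(t;X)$. In the online ATWC problem, when point $i$ arrives the algorithm must irrevocably choose $X_i\in P$ knowing only past events (not future events nor $n$); an adaptive adversary who knows the algorithm chooses the events. An online algorithm is $\sigma$-competitive for $P$ if for every instance $S$, $OPT_A(S;P)\le\sigma\cdot\min_{t\le T}d_{min}(t;X)$ for its output $X$. *)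

theory Defs
  imports "HOL-Analysis.Analysis" "HOL-Library.Extended_Real"
begin

text \<open>An atwc_instance is a list of (arrival, departure) pairs, indexed from 0.\<close>
type_synonym atwc_instance = "(real \<times> real) list"

definition valid_instance :: "atwc_instance \<Rightarrow> bool" where
  "valid_instance S \<longleftrightarrow> S \<noteq> [] \<and> fst (S ! 0) = 0
     \<and> (\<forall>i < length S. fst (S ! i) < snd (S ! i))
     \<and> (\<forall>i j. i \<le> j \<and> j < length S \<longrightarrow> fst (S ! i) \<le> fst (S ! j))"

definition present :: "atwc_instance \<Rightarrow> nat \<Rightarrow> real \<Rightarrow> bool" where
  "present S i t \<longleftrightarrow> i < length S \<and> fst (S ! i) \<le> t \<and> t \<le> snd (S ! i)"

definition horizon :: "atwc_instance \<Rightarrow> real" where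
  "horizon S = Max (snd ` set S)"

text \<open>d_min(t;X), as an extended real (minimum of the empty set is infinity).\<close>
definition dmin :: "'a::euclidean_space set \<Rightarrow> atwc_instance \<Rightarrow> (nat \<Rightarrow> 'a) \<Rightarrow> real \<Rightarrow> ereal" where
  "dmin P S X t = Inf (ereal ` ({infdist (X i) (frontier P) | i. present S i t}
       \<union> {dist (X i) (X j) | i j. i \<noteq> j \<and> present S i t \<and> present S j t}))"

definition objective :: "'a::euclidean_space set \<Rightarrow> atwc_instance \<Rightarrow> (nat \<Rightarrow> 'a) \<Rightarrow> ereal" where
  "objective P S X = (INF t \<in> {..horizon S}. dmin P S X t)"

definition OPT_A :: "'a::euclidean_space set \<Rightarrow> atwc_instance \<Rightarrow> ereal" where
  "OPT_A P S = (SUP X \<in> {X. \<forall>i < length S. X i \<in> P}. objective P S X)"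

text \<open>Information available to an online algorithm when point i arrives:
  the arrival times of the earlier points together with their departure times
  if these have already occurred (d_j \<le> s_i), and the arrival time s_i.
  Neither future events nor the total number of points are revealed.\<close>
definition history :: "atwc_instance \<Rightarrow> nat \<Rightarrow> (real \<times> real option) list \<times> real" where
  "history S i = (map (\<lambda>j. (fst (S ! j),
        if snd (S ! j) \<le> fst (S ! i) then Some (snd (S ! j)) else None)) [0..<i],
      fst (S ! i))"

text \<open>A deterministic online algorithm (for a fixed polytope) maps the observed history
  to a location.\<close>
type_synonym 'a online_alg = "(real \<times> real option) list \<times> real \<Rightarrow> 'a"

definition run_alg :: "'a online_alg \<Rightarrow> atwc_instance \<Rightarrow> nat \<Rightarrow> 'a" where
  "run_alg A S i = A (history S i)"

definition competitive :: "'a::euclidean_space online_alg \<Rightarrow> real \<Rightarrow> 'a set \<Rightarrow> bool" where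
  "competitive A \<sigma> P \<longleftrightarrow> (\<forall>S. valid_instance S \<longrightarrow>
      (\<forall>i < length S. run_alg A S i \<in> P) \<and>
      OPT_A P S \<le> ereal \<sigma> * objective P S (run_alg A S))"

definition full_dim_polytope :: "'a::euclidean_space set \<Rightarrow> bool" where
  "full_dim_polytope P \<longleftrightarrow> polytope P \<and> aff_dim P = int DIM('a)"

end

theory Submission
  imports Defs
begin

text \<open>
  Let \<open>P\<close> be a polytope with \<open>cball 0 \<rho> \<subseteq> P \<subseteq> cball 0 1\<close>. The adversary starts a point at
  time 0, the algorithm places it at \<open>x\<^sub>0\<close>, and the adversary may either stop, or start a second
  point at the same time. In the first case the algorithm achieves at most \<open>1 - |x\<^sub>0|\<close> against
  \<open>OPT \<ge> \<rho>\<close>; in the second at most \<open>min (1 - |x\<^sub>1|) (|x\<^sub>0| + |x\<^sub>1|) \<le> (1 + |x\<^sub>0|)/2\<close> against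
  \<open>OPT \<ge> 2\<rho>/3\<close> (two points at \<open>\<plusminus>\<rho>/3\<close>). Adding \<open>\<rho> \<le> \<sigma> (1 - |x\<^sub>0|)\<close> and
  \<open>4\<rho>/3 \<le> \<sigma> (1 + |x\<^sub>0|)\<close> gives \<open>7\<rho>/6 \<le> \<sigma>\<close>, and \<open>\<rho>\<close> can be taken arbitrarily close to 1.
\<close>

lemma cball_subset_if_near_unit_sphere:
  fixes C :: "'a::euclidean_space set"
  assumes "closed C" "convex C"
    and near: "\<And>u. norm u = 1 \<Longrightarrow> \<exists>v\<in>C. dist u v < \<epsilon>"
  shows "cball 0 (1 - \<epsilon>) \<subseteq> C"
proof
  fix y :: 'a assume y: "y \<in> cball 0 (1 - \<epsilon>)"
  show "y \<in> C"
  proof (rule ccontr)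
    assume "y \<notin> C"
    then obtain a b where ay: "inner a y < b" and aC: "\<forall>x\<in>C. b < inner a x"
      using separating_hyperplane_closed_point assms(1,2) by blast
    obtain e :: 'a where "e \<in> Basis" using nonempty_Basis by blast
    then obtain c where "c \<in> C" using near[of e] by auto
    have "a \<noteq> 0"
      using ay aC \<open>c \<in> C\<close> by fastforce
    define u where "u = - a /\<^sub>R norm a"
    have nu: "norm u = 1" using \<open>a \<noteq> 0\<close> by (simp add: u_def)
    then obtain v where "v \<in> C" and uv: "dist u v < \<epsilon>" using near by blast
    have "inner u v < inner u y"
      using ay aC \<open>v \<in> C\<close> \<open>a \<noteq> 0\<close> by (force simp: u_def divide_simps)
    moreover have "1 - \<epsilon> \<le> inner u v"
    proof -
      have "inner u v = 1 + inner u (v - u)"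
        using nu by (simp add: inner_diff_right dot_square_norm)
      moreover have "\<bar>inner u (v - u)\<bar> \<le> norm (v - u)"
        using Cauchy_Schwarz_ineq2[of u "v - u"] nu by simp
      ultimately show ?thesis using uv by (simp add: dist_norm norm_minus_commute)
    qed
    moreover have "inner u y \<le> norm y" using norm_cauchy_schwarz[of u y] nu by simp
    ultimately show False using y by simp
  qed
qed

lemma polytope_between_cballs:
  fixes \<epsilon> :: real
  assumes "0 < \<epsilon>"
  obtains P :: "'a::euclidean_space set"
  where "polytope P" "cball 0 (1 - \<epsilon>) \<subseteq> P" "P \<subseteq> cball 0 1"
proof -
  have "cball (0::'a) 1 \<subseteq> (\<Union>c\<in>cball 0 1. ball c \<epsilon>)"
    using assms centre_in_ball by blast
  then obtain K where K: "K \<subseteq> cball 0 1" "finite K" "cball (0::'a) 1 \<subseteq> (\<Union>c\<in>K. ball c \<epsilon>)"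
    using compactE_image[OF compact_cball, of "cball 0 1" "\<lambda>c. ball c \<epsilon>"] by (metis open_ball)
  have "cball 0 (1 - \<epsilon>) \<subseteq> convex hull K"
  proof (rule cball_subset_if_near_unit_sphere)
    show "closed (convex hull K)"
      using K(2) by (simp add: compact_imp_closed finite_imp_compact_convex_hull)
    fix u :: 'a assume "norm u = 1"
    then have "u \<in> cball 0 1" by simp
    then obtain v where "v \<in> K" "u \<in> ball v \<epsilon>" using K(3) by blast
    then show "\<exists>v\<in>convex hull K. dist u v < \<epsilon>"
      using hull_subset by (fastforce simp: dist_commute)
  qed simp
  moreover have "convex hull K \<subseteq> cball 0 1"
    using K(1) by (simp add: hull_minimal)
  moreover have "polytope (convex hull K)"
    using K(2) by (auto simp: polytope_def)
  ultimately show ?thesis using that by blast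
qed

lemma full_dim_polytope_if_cball_subset:
  fixes P :: "'a::euclidean_space set"
  assumes "polytope P" "cball c r \<subseteq> P" "0 < r"
  shows "full_dim_polytope P"
proof -
  have "aff_dim (ball c r) = int DIM('a)" using assms(3) by (intro aff_dim_open) auto
  moreover have "aff_dim (ball c r) \<le> aff_dim P"
    using assms(2) ball_subset_cball by (intro aff_dim_subset) blast
  ultimately show ?thesis
    using assms(1) aff_dim_le_DIM[of P] by (simp add: full_dim_polytope_def)
qed

lemma infdist_frontier_le_one_minus_norm:
  fixes P :: "'a::euclidean_space set"
  assumes "P \<subseteq> cball 0 1" "closed P" "x \<in> P"
  shows "infdist x (frontier P) \<le> 1 - norm x"
proof (cases "x \<in> frontier P")
  case True
  then show ?thesis using assms by auto
next
  case False
  then have x: "x \<in> interior P" using assms(2,3) by (simp add: frontier_def)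
  obtain e :: 'a where e: "e \<in> Basis" using nonempty_Basis by blast
  define y where "y = (if x = 0 then e else x /\<^sub>R norm x)"
  have ny: "norm y = 1" using e by (simp add: y_def)
  have "norm x \<le> 1" using assms by auto
  have dxy: "dist x y = 1 - norm x"
  proof (cases "x = 0")
    case False
    then have "x - y = (1 - 1 / norm x) *\<^sub>R x" by (simp add: y_def algebra_simps divide_inverse)
    then have "dist x y = \<bar>(1 - 1 / norm x) * norm x\<bar>" by (simp add: dist_norm abs_mult)
    also have "\<dots> = 1 - norm x" using False \<open>norm x \<le> 1\<close> by (simp add: algebra_simps)
    finally show ?thesis .
  qed (use ny in \<open>simp add: y_def dist_norm\<close>)
  have "interior P \<subseteq> ball 0 1" using interior_mono[OF assms(1)] by simp
  then have "y \<notin> interior P" using ny by auto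
  then have "closed_segment x y \<inter> frontier (interior P) \<noteq> {}"
    using x by (intro connected_Int_frontier) auto
  then obtain z where z: "z \<in> closed_segment x y" "z \<in> frontier P"
    using frontier_interior_subset by blast
  have "dist x z \<le> dist x y" using dist_in_closed_segment[OF z(1)] by (simp add: dist_commute)
  then show ?thesis using infdist_le2[OF z(2)] dxy by simp
qed

lemma infdist_frontier_ge_radius_minus_norm:
  fixes P :: "'a::euclidean_space set"
  assumes "cball 0 \<rho> \<subseteq> P" "frontier P \<noteq> {}"
  shows "\<rho> - norm x \<le> infdist x (frontier P)"
proof -
  have ball: "ball 0 \<rho> \<subseteq> interior P"
    using assms(1) by (meson ball_subset_cball interior_maximal open_ball order_trans)
  have "\<rho> - norm x \<le> dist x z" if "z \<in> frontier P" for z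
  proof -
    have "\<rho> \<le> norm z" using that ball by (force simp: frontier_def not_less)
    moreover have "norm z \<le> norm x + dist x z"
      using norm_triangle_ineq[of x "z - x"] by (simp add: dist_norm norm_minus_commute)
    ultimately show ?thesis by simp
  qed
  then show ?thesis using assms(2) by (simp add: infdist_notempty cINF_greatest)
qed

lemma objective_geI:
  assumes "\<And>i t. present S i t \<Longrightarrow> c \<le> infdist (X i) (frontier P)"
    and "\<And>i j t. i \<noteq> j \<Longrightarrow> present S i t \<Longrightarrow> present S j t \<Longrightarrow> c \<le> dist (X i) (X j)"
  shows "ereal c \<le> objective P S X"
  unfolding objective_def dmin_def using assms by (auto intro!: INF_greatest Inf_greatest)

lemma objective_nonneg: "0 \<le> objective P S X"
  using objective_geI[of S 0 X P] by (simp add: infdist_nonneg zero_ereal_def)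

lemma objective_le_infdist_frontier:
  assumes "0 \<le> horizon S" "present S i 0"
  shows "objective P S X \<le> ereal (infdist (X i) (frontier P))"
proof -
  have "objective P S X \<le> dmin P S X 0"
    unfolding objective_def using assms(1) by (auto intro: INF_lower)
  also have "\<dots> \<le> ereal (infdist (X i) (frontier P))"
    unfolding dmin_def using assms(2) by (auto intro!: Inf_lower)
  finally show ?thesis .
qed

lemma objective_le_dist:
  assumes "0 \<le> horizon S" "present S i 0" "present S j 0" "i \<noteq> j"
  shows "objective P S X \<le> ereal (dist (X i) (X j))"
proof -
  have "objective P S X \<le> dmin P S X 0"
    unfolding objective_def using assms(1) by (auto intro: INF_lower)
  also have "\<dots> \<le> ereal (dist (X i) (X j))"
    unfolding dmin_def using assms(2-4) by (auto intro!: Inf_lower)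
  finally show ?thesis .
qed

lemma objective_le_OPT_A:
  assumes "\<forall>i < length S. X i \<in> P"
  shows "objective P S X \<le> OPT_A P S"
  unfolding OPT_A_def using assms by (intro SUP_upper) auto

lemma ereal_le_mult_bound:
  assumes "ereal c \<le> ereal \<sigma> * x" "0 \<le> x" "x \<le> ereal d" "0 < c"
  shows "c \<le> \<sigma> * d"
proof -
  obtain r where r: "x = ereal r" "0 \<le> r" "r \<le> d" using assms(2,3) by (cases x) auto
  then have "c \<le> \<sigma> * r" using assms(1) by simp
  then have "0 < \<sigma>" using r(2) assms(4) by (metis mult_nonpos_nonneg not_le order.strict_trans1)
  then show ?thesis using \<open>c \<le> \<sigma> * r\<close> mult_left_mono[OF r(3), of \<sigma>] by linarith
qed

definition one_point :: atwc_instance where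
  "one_point = [(0, 1)]"

definition two_points :: atwc_instance where
  "two_points = [(0, 1), (0, 1)]"

lemma valid_one_point: "valid_instance one_point"
  by (simp add: one_point_def valid_instance_def)

lemma valid_two_points: "valid_instance two_points"
  by (auto simp: two_points_def valid_instance_def nth_Cons split: nat.splits)

lemma horizon_one_point: "horizon one_point = 1"
  by (simp add: one_point_def horizon_def)

lemma horizon_two_points: "horizon two_points = 1"
  by (simp add: two_points_def horizon_def)

lemma present_one_point: "present one_point i t \<longleftrightarrow> i = 0 \<and> 0 \<le> t \<and> t \<le> 1"
  by (auto simp: one_point_def present_def)

lemma present_two_points: "present two_points i t \<longleftrightarrow> i < 2 \<and> 0 \<le> t \<and> t \<le> 1"
  by (auto simp: two_points_def present_def nth_Cons split: nat.splits)

lemma OPT_A_one_point_ge: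
  fixes P :: "'a::euclidean_space set"
  assumes "cball 0 \<rho> \<subseteq> P" "frontier P \<noteq> {}" "0 \<le> \<rho>"
  shows "ereal \<rho> \<le> OPT_A P one_point"
proof -
  have "ereal \<rho> \<le> objective P one_point (\<lambda>_. 0)"
    using infdist_frontier_ge_radius_minus_norm[OF assms(1,2), of 0]
    by (intro objective_geI) (auto simp: present_one_point)
  also have "\<dots> \<le> OPT_A P one_point"
    using assms(1,3) by (intro objective_le_OPT_A) auto
  finally show ?thesis .
qed

lemma OPT_A_two_points_ge:
  fixes P :: "'a::euclidean_space set"
  assumes "cball 0 \<rho> \<subseteq> P" "frontier P \<noteq> {}" "0 \<le> \<rho>"
  shows "ereal (2 * \<rho> / 3) \<le> OPT_A P two_points"
proof -
  obtain e :: 'a where "e \<in> Basis" using nonempty_Basis by blast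
  then have ne: "norm e = 1" by simp
  define Y :: "nat \<Rightarrow> 'a" where "Y i = (if i = 0 then (\<rho>/3) *\<^sub>R e else - ((\<rho>/3) *\<^sub>R e))" for i
  have nY: "norm (Y i) = \<rho>/3" for i using ne assms(3) by (simp add: Y_def)
  have "dist (Y 0) (Y 1) = 2 * \<rho> / 3"
  proof -
    have "Y 0 - Y 1 = (2 * \<rho> / 3) *\<^sub>R e" by (simp add: Y_def scaleR_2[symmetric] algebra_simps)
    then show ?thesis using ne assms(3) by (simp add: dist_norm)
  qed
  moreover have "2 * \<rho> / 3 \<le> infdist (Y i) (frontier P)" for i
    using infdist_frontier_ge_radius_minus_norm[OF assms(1,2), of "Y i"] nY[of i] by simp
  ultimately have "ereal (2 * \<rho> / 3) \<le> objective P two_points Y"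
    by (intro objective_geI) (auto simp: present_two_points dist_commute less_2_cases_iff)
  moreover have "Y i \<in> P" for i
    using nY[of i] assms(1,3) by (auto simp: subset_iff)
  then have "objective P two_points Y \<le> OPT_A P two_points"
    by (intro objective_le_OPT_A) auto
  ultimately show ?thesis by (rule order_trans)
qed

lemma competitive_ge_seven_sixths_radius:
  fixes P :: "'a::euclidean_space set"
  assumes "closed P" "cball 0 \<rho> \<subseteq> P" "P \<subseteq> cball 0 1" "0 < \<rho>"
    and comp: "competitive A \<sigma> P"
  shows "7 * \<rho> / 6 \<le> \<sigma>"
proof -
  define x\<^sub>0 where "x\<^sub>0 = A ([], 0)"
  define x\<^sub>1 where "x\<^sub>1 = A ([(0, None)], 0)"
  define X\<^sub>1 where "X\<^sub>1 = run_alg A one_point"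
  define X\<^sub>2 where "X\<^sub>2 = run_alg A two_points"
  have X: \<comment> \<open>the first point sees the same history in both instances\<close>
    "X\<^sub>1 0 = x\<^sub>0" "X\<^sub>2 0 = x\<^sub>0" "X\<^sub>2 1 = x\<^sub>1"
    by (simp_all add: X\<^sub>1_def X\<^sub>2_def x\<^sub>0_def x\<^sub>1_def run_alg_def history_def one_point_def two_points_def)
  obtain e :: 'a where "e \<in> Basis" using nonempty_Basis by blast
  then have "2 *\<^sub>R e \<notin> P" using assms(3) by auto
  then have "P \<noteq> {}" "P \<noteq> UNIV" using assms(2,4) by auto
  then have fr: "frontier P \<noteq> {}" by (simp add: frontier_not_empty)
  have in1: "\<forall>i < length one_point. X\<^sub>1 i \<in> P"
    and c1: "OPT_A P one_point \<le> ereal \<sigma> * objective P one_point X\<^sub>1"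
    using comp valid_one_point unfolding competitive_def X\<^sub>1_def by blast+
  have in2: "\<forall>i < length two_points. X\<^sub>2 i \<in> P"
    and c2: "OPT_A P two_points \<le> ereal \<sigma> * objective P two_points X\<^sub>2"
    using comp valid_two_points unfolding competitive_def X\<^sub>2_def by blast+
  have "x\<^sub>0 \<in> P" using in1 X by (auto simp: one_point_def)
  have "x\<^sub>1 \<in> P" using in2 X by (auto simp: two_points_def)

  have "ereal \<rho> \<le> ereal \<sigma> * objective P one_point X\<^sub>1"
    using OPT_A_one_point_ge[OF assms(2) fr] c1 assms(4) by (auto intro: order_trans)
  note bound1 = ereal_le_mult_bound[OF this objective_nonneg]
  have "objective P one_point X\<^sub>1 \<le> ereal (infdist (X\<^sub>1 0) (frontier P))"
    by (rule objective_le_infdist_frontier) (simp_all add: horizon_one_point present_one_point)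
  also have "\<dots> \<le> ereal (1 - norm x\<^sub>0)"
    using infdist_frontier_le_one_minus_norm[OF assms(3,1) \<open>x\<^sub>0 \<in> P\<close>] X by simp
  finally have single: "\<rho> \<le> \<sigma> * (1 - norm x\<^sub>0)"
    by (rule bound1) (use assms(4) in simp)

  have "ereal (2 * \<rho> / 3) \<le> ereal \<sigma> * objective P two_points X\<^sub>2"
    using OPT_A_two_points_ge[OF assms(2) fr] c2 assms(4) by (auto intro: order_trans)
  note bound2 = ereal_le_mult_bound[OF this objective_nonneg]
  have "objective P two_points X\<^sub>2 \<le> ereal (infdist (X\<^sub>2 1) (frontier P))"
    by (rule objective_le_infdist_frontier) (simp_all add: horizon_two_points present_two_points)
  also have "\<dots> \<le> ereal (1 - norm x\<^sub>1)"
    using infdist_frontier_le_one_minus_norm[OF assms(3,1) \<open>x\<^sub>1 \<in> P\<close>] X by simp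
  finally have o1: "objective P two_points X\<^sub>2 \<le> ereal (1 - norm x\<^sub>1)" .
  have "objective P two_points X\<^sub>2 \<le> ereal (dist (X\<^sub>2 0) (X\<^sub>2 1))"
    by (rule objective_le_dist) (simp_all add: horizon_two_points present_two_points)
  then have o2: "objective P two_points X\<^sub>2 \<le> ereal (dist x\<^sub>0 x\<^sub>1)" using X by simp
  have "dist x\<^sub>0 x\<^sub>1 \<le> norm x\<^sub>0 + norm x\<^sub>1"
    by (simp add: dist_norm norm_triangle_ineq4)
  then have "min (1 - norm x\<^sub>1) (dist x\<^sub>0 x\<^sub>1) \<le> (1 + norm x\<^sub>0) / 2"
    by (simp add: min_def)
  then have "objective P two_points X\<^sub>2 \<le> ereal ((1 + norm x\<^sub>0) / 2)"
    using o1 o2 unfolding min_def by (auto split: if_splits intro: order.trans)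
  then have pair: "2 * \<rho> / 3 \<le> \<sigma> * ((1 + norm x\<^sub>0) / 2)"
    by (rule bound2) (use assms(4) in simp)
  show ?thesis using single pair by (simp add: algebra_simps)
qed

text \<open>The adversary works in every dimension.\<close>

theorem theorem6:
  assumes "DIM('a::euclidean_space) \<ge> 2"
  shows "\<not> (\<exists>(A :: 'a set \<Rightarrow> 'a online_alg) \<sigma>. \<sigma> < 7/6 \<and>
            (\<forall>P. full_dim_polytope P \<longrightarrow> competitive (A P) \<sigma> P))"
proof
  assume "\<exists>(A :: 'a set \<Rightarrow> 'a online_alg) \<sigma>. \<sigma> < 7/6 \<and>
            (\<forall>P. full_dim_polytope P \<longrightarrow> competitive (A P) \<sigma> P)"
  then obtain A :: "'a set \<Rightarrow> 'a online_alg" and \<sigma> where "\<sigma> < 7/6"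
    and comp: "\<And>P. full_dim_polytope P \<Longrightarrow> competitive (A P) \<sigma> P" by blast
  define \<rho> where "\<rho> = max (1/2) ((6 * \<sigma> / 7 + 1) / 2)"
  have \<rho>: "0 < \<rho>" "\<rho> < 1" "\<sigma> < 7 * \<rho> / 6" using \<open>\<sigma> < 7/6\<close> by (auto simp: \<rho>_def max_def)
  obtain P :: "'a set" where P: "polytope P" "cball 0 \<rho> \<subseteq> P" "P \<subseteq> cball 0 1"
    using polytope_between_cballs[of "1 - \<rho>"] \<rho> by auto
  have "competitive (A P) \<sigma> P"
    using P \<rho> by (intro comp full_dim_polytope_if_cball_subset) auto
  then have "7 * \<rho> / 6 \<le> \<sigma>"
    using P \<rho> by (intro competitive_ge_seven_sixths_radius) (auto simp: polytope_imp_closed)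
  with \<rho> show False by simp
qed

end
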